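(* Let $V$ be an object of $\mathcal C$ and let $v\in V$ be a dominant vector of weight $i\in\{0,1,\dots,r-2\}$. Put $j=r-2-i$ and define the following vectors of $V$: - $h_{i-2k}=F^kv$ for $k=0,\dots,i$; - $R_{r-j}=Ev$ and $R_{r-j+2k}=E^kR_{r-j}$ for $k=0,\dots,j$; - $s_i=FR_{r-j}$ and $s_{i-2k}=F^ks_i$ for $k=0,\dots,i$; - $L_{j-r}=F^{i+1}v$ and $L_{j-r-2k}=F^kL_{j-r}$ for $k=0,\dots,j$. Then the linear span of these $2r$ vectors is a submodule of $V$. Moreover, the following relations hold whenever the involved vectors are defined: - $Hw_m=mw_m$ and $Kw_m=q^mw_m$ for $w\in\{h,s,R,L\}$; - $ER_m=R_{m+2}$, and $Fw_m=w_{m-2}$ for $w\in\{h,s,L\}$; - $Fh_{-i}=L_{j-r}$ and $EL_{j-r}=s_{-i}$; - $ER_{j+r}=Es_i=Fs_{-i}=FL_{-j-r}=0$; - $Eh_{i-2k}=\gamma_{i,k}h_{i-2k+2}+s_{i-2k+2}$ and $Es_{i-2k}=\gamma_{i,k}s_{i-2k+2}$; - $FR_{r-j+2k}=-\gamma_{j,k}R_{r-j+2k-2}$ and $EL_{j-2k-r}=-\gamma_{j,k}L_{j-2k-r+2}$. Here $\gamma_{n,k}=[k][n-k+1]$.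
   Context: Fix a positive integer $r$. Set $q=e^{\pi\sqrt{-1}/r}$, $q^x=e^{\pi\sqrt{-1}x/r}$, $\{x\}=q^x-q^{-x}$, $[x]=\{x\}/\{1\}$. $\overline U=\overline U_q^H\mathfrak{sl}(2)$ is the $\mathbb C$-algebra generated by $E,F,K,K^{-1},H$ with relations - $KK^{-1}=K^{-1}K=1$, $KEK^{-1}=q^2E$, $KFK^{-1}=q^{-2}F$, - $EF-FE=\frac{K-K^{-1}}{q-q^{-1}}$, - $HK=KH$, $[H,E]=2E$, $[H,F]=-2F$, - $E^r=F^r=0$. $\mathcal C$ is the category of finite-dimensional weight $\overline U$-modules: $H$ acts diagonalizably and $K$ acts by $q^\lambda$ on $H$-eigenvectors of eigenvalue (weight) $\lambda$. A weight vector $v$ is called dominant if $(FE)^2v=0$. *)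

theory Defs
  imports Complex_Main
begin

text \<open>Quantum parameters: q = exp(pi i / r), q^x = exp(pi i x / r),
  {x} = q^x - q^-x, [x] = {x}/{1}, gamma_{n,k} = [k][n-k+1].\<close>

definition qp :: "nat \<Rightarrow> complex \<Rightarrow> complex" where
  "qp r x = exp (complex_of_real pi * \<i> * x / of_nat r)"

definition qbr :: "nat \<Rightarrow> complex \<Rightarrow> complex" where
  "qbr r x = qp r x - qp r (- x)"

definition qint :: "nat \<Rightarrow> complex \<Rightarrow> complex" where
  "qint r x = qbr r x / qbr r 1"

definition qgamma :: "nat \<Rightarrow> nat \<Rightarrow> nat \<Rightarrow> complex" where
  "qgamma r n k = qint r (of_nat k) * qint r (of_nat n - of_nat k + 1)"

text \<open>A finite-dimensional complex vector space ('v, scale) together with linear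
  operators E, F, K, Ki (= K^-1), H defining an object of the category C:
  a finite-dimensional weight module over the unrolled restricted quantum group.\<close>

definition weight_module ::
  "nat \<Rightarrow> (complex \<Rightarrow> 'v::ab_group_add \<Rightarrow> 'v) \<Rightarrow> ('v \<Rightarrow> 'v) \<Rightarrow> ('v \<Rightarrow> 'v) \<Rightarrow>
   ('v \<Rightarrow> 'v) \<Rightarrow> ('v \<Rightarrow> 'v) \<Rightarrow> ('v \<Rightarrow> 'v) \<Rightarrow> bool" where
  "weight_module r scale E F K Ki H \<longleftrightarrow>
     vector_space scale \<and>
     (\<exists>B. finite B \<and> module.span scale B = UNIV) \<and>
     Vector_Spaces.linear scale scale E \<and> Vector_Spaces.linear scale scale F \<and>
     Vector_Spaces.linear scale scale K \<and> Vector_Spaces.linear scale scale Ki \<and>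
     Vector_Spaces.linear scale scale H \<and>
     (\<forall>x. K (Ki x) = x) \<and> (\<forall>x. Ki (K x) = x) \<and>
     (\<forall>x. K (E (Ki x)) = scale (qp r 2) (E x)) \<and>
     (\<forall>x. K (F (Ki x)) = scale (qp r (-2)) (F x)) \<and>
     (\<forall>x. E (F x) - F (E x) = scale (1 / (qp r 1 - qp r (-1))) (K x - Ki x)) \<and>
     (\<forall>x. H (K x) = K (H x)) \<and>
     (\<forall>x. H (E x) - E (H x) = scale 2 (E x)) \<and>
     (\<forall>x. H (F x) - F (H x) = scale (-2) (F x)) \<and>
     (\<forall>x. (E ^^ r) x = 0) \<and> (\<forall>x. (F ^^ r) x = 0) \<and>
     module.span scale {w. \<exists>c. H w = scale c w} = UNIV \<and>
     (\<forall>w c. H w = scale c w \<longrightarrow> K w = scale (qp r c) w)"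

end

theory Submission
  imports Defs "HOL-Analysis.Complex_Transcendental"
begin

text \<open>The Casimir element \<open>C = FE + (qK + q\<^sup>-\<^sup>1K\<^sup>-\<^sup>1)/{1}\<^sup>2\<close> commutes with \<open>E\<close> and \<open>F\<close>
  and acts on a vector \<open>y\<close> of weight \<open>\<mu>\<close> as \<open>FE + c(\<mu>)\<close>, where
  \<open>c(\<mu>) = (q\<^sup>\<mu>\<^sup>+\<^sup>1 + q\<^sup>-\<^sup>\<mu>\<^sup>-\<^sup>1)/{1}\<^sup>2\<close>. Dominance of \<open>v\<close> says exactly that
  \<open>(C - c(i))\<^sup>2 v = 0\<close>, and this persists along the \<open>E\<close>- and \<open>F\<close>-strings through \<open>v\<close> and
  \<open>FEv\<close>. Since \<open>c(\<mu>) = c(\<nu>)\<close> only if \<open>\<mu> \<equiv> \<nu>\<close> or \<open>\<mu> \<equiv> -\<nu>-2\<close> modulo \<open>2r\<close>, a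
  vector \<open>E\<^sup>ny\<close> (resp. \<open>F\<^sup>ny\<close>) killed by \<open>E\<close> (resp. \<open>F\<close>) must itself vanish unless its
  weight hits one of these congruences. Descending from \<open>E\<^sup>r = F\<^sup>r = 0\<close> this gives
  \<open>E\<^sup>j\<^sup>+\<^sup>2v = 0\<close>, \<open>EFEv = 0\<close> and \<open>F\<^sup>i\<^sup>+\<^sup>2Ev = 0\<close>. All other relations are the commutation
  formula \<open>EF\<^sup>n\<^sup>+\<^sup>1 = F\<^sup>n\<^sup>+\<^sup>1E + [n+1][\<mu>-n]F\<^sup>n\<close> on weight \<open>\<mu>\<close> and its mirror image,
  combined with \<open>[r - x] = [x]\<close>.\<close>

section \<open>Quantum numbers\<close>

lemma qp_add: "qp r (x + y) = qp r x * qp r y"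
  unfolding qp_def by (simp add: ring_distribs add_divide_distrib exp_add)

lemma qp_minus: "qp r (- x) = inverse (qp r x)"
  unfolding qp_def by (simp add: exp_minus[symmetric])

lemma qp_nonzero [simp]: "qp r x \<noteq> 0"
  unfolding qp_def by simp

lemma qp_diff: "qp r (x - y) = qp r x / qp r y"
  using qp_add[of r x "- y"] by (simp add: qp_minus divide_inverse)

lemma qp_of_int_eq_1_imp_dvd:
  assumes "r > 0" "qp r (of_int m) = 1"
  shows "int (2 * r) dvd m"
proof -
  from assms(2) obtain n :: int
    where "Im (complex_of_real pi * \<i> * of_int m / of_nat r) = of_int (2 * n) * pi"
    unfolding qp_def exp_eq_1 by blast
  then have "pi * m / r = 2 * n * pi"
    by (simp add: Im_divide_of_nat)
  with assms(1) have "real_of_int m = real_of_int (2 * n * int r)"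
    by (simp add: field_simps)
  then show ?thesis
    by (simp only: of_int_eq_iff) simp
qed

lemma qbr_eq: "qbr r x = qp r x - inverse (qp r x)"
  unfolding qbr_def qp_minus ..

lemma qbr_1_nonzero:
  assumes "r \<ge> 2"
  shows "qbr r 1 \<noteq> 0"
proof
  assume "qbr r 1 = 0"
  then have "qp r (of_int 2) = 1"
    using qp_add[of r 1 1] by (simp add: qbr_eq field_simps)
  from qp_of_int_eq_1_imp_dvd[OF _ this] assms have "int (2 * r) dvd 2"
    by simp
  then have "int (2 * r) \<le> 2"
    by (rule zdvd_imp_le) simp
  with assms show False
    by simp
qed

lemma qint_1: "r \<ge> 2 \<Longrightarrow> qint r 1 = 1"
  unfolding qint_def using qbr_1_nonzero by simp

lemma qint_0 [simp]: "qint r 0 = 0"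
  unfolding qint_def qbr_eq by (simp add: qp_def)

lemma qint_minus: "qint r (- x) = - qint r x"
  unfolding qint_def qbr_eq qp_minus by (metis inverse_inverse_eq minus_diff_eq divide_minus_left)

lemma qint_reflect: "r > 0 \<Longrightarrow> qint r (of_nat r - x) = qint r x"
proof -
  assume "r > 0"
  then have "qp r (of_nat r) = -1"
    unfolding qp_def by (simp add: mult.commute)
  then have "qp r (of_nat r - x) = - inverse (qp r x)"
    by (simp add: qp_diff divide_inverse)
  then show ?thesis
    unfolding qint_def qbr_eq by simp
qed

lemma qint_mult_add_qint:
  assumes "r \<ge> 2"
  shows "qint r n * qint r (m - n + 1) + qint r (m - 2 * n) = qint r (n + 1) * qint r (m - n)"
proof -
  define A B q where "A = qp r n" and "B = qp r m" and "q = qp r 1"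
  define d where "d = q - inverse q"
  have nonzero: "A \<noteq> 0" "B \<noteq> 0" "q \<noteq> 0" "d \<noteq> 0"
    using qbr_1_nonzero[OF assms] unfolding A_def B_def q_def d_def qbr_eq by simp_all
  have "qp r (m - n + 1) = B * q / A" "qp r (m - 2 * n) = B / (A * A)"
    "qp r (n + 1) = A * q" "qp r (m - n) = B / A"
    unfolding A_def B_def q_def qp_add qp_diff mult_2 by simp_all
  moreover have "(A - inverse A) * (B * q / A - inverse (B * q / A)) + d * (B / (A * A) - inverse (B / (A * A)))
      = (A * q - inverse (A * q)) * (B / A - inverse (B / A))"
    unfolding d_def using nonzero by (simp add: field_simps)
  moreover have "x * y + d * z = u * w \<Longrightarrow> (x / d) * (y / d) + z / d = (u / d) * (w / d)"
    for x y z u w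
    using nonzero by (simp add: field_simps)
  ultimately show ?thesis
    unfolding qint_def qbr_eq A_def[symmetric] B_def[symmetric] q_def[symmetric] d_def[symmetric]
    by presburger
qed

lemma qint_mult_add_qint':
  assumes "r \<ge> 2"
  shows "qint r n * qint r (m + n - 1) + qint r (m + 2 * n) = qint r (n + 1) * qint r (m + n)"
  using qint_mult_add_qint[OF assms, of n "- m"] qint_minus[of r "m + 2 * n"]
    qint_minus[of r "m + n - 1"] qint_minus[of r "m + n"]
  by (simp add: algebra_simps)

definition casimir_const :: "nat \<Rightarrow> complex \<Rightarrow> complex" where
  "casimir_const r \<mu> = (qp r (\<mu> + 1) + inverse (qp r (\<mu> + 1))) / (qbr r 1)\<^sup>2"

lemma casimir_const_step:
  assumes "r \<ge> 2"
  shows "casimir_const r (\<mu> + 2) = casimir_const r \<mu> + qint r (\<mu> + 2)"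
proof -
  define a q where "a = qp r (\<mu> + 1)" and "q = qp r 1"
  have nonzero: "a \<noteq> 0" "q \<noteq> 0" "q - inverse q \<noteq> 0"
    using qbr_1_nonzero[OF assms] unfolding a_def q_def qbr_eq by simp_all
  have shift: "qp r (\<mu> + 2 + 1) = a * q * q" "qp r (\<mu> + 2) = a * q"
    unfolding a_def q_def by (metis add.assoc one_add_one qp_add)+
  have "casimir_const r (\<mu> + 2) = (a * q * q + inverse (a * q * q)) / (q - inverse q)\<^sup>2"
    unfolding casimir_const_def qbr_eq shift q_def ..
  also have "a * q * q + inverse (a * q * q)
      = (a + inverse a) + (q - inverse q) * (a * q - inverse (a * q))"
    using nonzero by (simp add: field_simps)
  also have "\<dots> / (q - inverse q)\<^sup>2
      = (a + inverse a) / (q - inverse q)\<^sup>2 + (a * q - inverse (a * q)) / (q - inverse q)"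
    using nonzero by (simp add: add_divide_distrib power2_eq_square)
  also have "\<dots> = casimir_const r \<mu> + qint r (\<mu> + 2)"
    unfolding casimir_const_def qint_def qbr_eq shift a_def q_def ..
  finally show ?thesis .
qed

lemma casimir_const_eq_imp_dvd:
  assumes "r \<ge> 2" and "casimir_const r (of_int m) = casimir_const r (of_int n)"
  shows "int (2 * r) dvd (m - n) \<or> int (2 * r) dvd (m + n + 2)"
proof -
  define a b where "a = qp r (of_int m + 1)" and "b = qp r (of_int n + 1)"
  have "a \<noteq> 0" "b \<noteq> 0"
    unfolding a_def b_def by simp_all
  moreover have "a + inverse a = b + inverse b"
    using assms(2) qbr_1_nonzero[OF assms(1)] unfolding casimir_const_def a_def b_def by simp
  ultimately have "(a - b) * (a * b - 1) = 0"
    by (simp add: field_simps)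
  then have "a = b \<or> a * b = 1"
    by simp
  then show ?thesis
  proof
    assume "a = b"
    then have "qp r (of_int (m - n)) = 1"
      unfolding a_def b_def using qp_diff[of r "of_int m + 1" "of_int n + 1"] by simp
    then show ?thesis
      using qp_of_int_eq_1_imp_dvd assms(1) by simp
  next
    assume "a * b = 1"
    then have "qp r (of_int (m + n + 2)) = 1"
      unfolding a_def b_def using qp_add[of r "of_int m + 1" "of_int n + 1"]
      by (simp add: algebra_simps)
    then show ?thesis
      using qp_of_int_eq_1_imp_dvd assms(1) by simp
  qed
qed

lemma casimir_const_reflect:
  assumes "r > 0" and "m + n + 2 = 2 * int r"
  shows "casimir_const r (of_int m) = casimir_const r (of_int n)"
proof -
  have "(of_int m + 1 :: complex) = 2 * of_nat r - (of_int n + 1)"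
    using arg_cong[OF assms(2), of "of_int :: int \<Rightarrow> complex"] by (simp add: algebra_simps)
  then have "qp r (of_int m + 1) = qp r (2 * of_nat r) / qp r (of_int n + 1)"
    by (simp only: qp_diff)
  also have "qp r (2 * of_nat r) = 1"
    using assms(1) unfolding qp_def by (simp add: mult.commute mult.left_commute)
  finally show ?thesis
    unfolding casimir_const_def by (simp add: divide_inverse add.commute)
qed

lemma casimir_const_neq:
  assumes "r \<ge> 2" and "\<not> int (2 * r) dvd (m - n)" and "\<not> int (2 * r) dvd (m + n + 2)"
  shows "casimir_const r (of_int m) \<noteq> casimir_const r (of_int n)"
  using casimir_const_eq_imp_dvd[OF assms(1)] assms(2,3) by blast

lemma not_dvd_between_multiples:
  fixes x d k :: int
  assumes "k * d < x" and "x < (k + 1) * d"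
  shows "\<not> d dvd x"
proof
  assume "d dvd x"
  then obtain t where "x = t * d"
    by (metis dvdE mult.commute)
  moreover have "d > 0"
    using assms by (simp add: distrib_right)
  ultimately have "k < t" "t < k + 1"
    using assms by simp_all
  then show False
    by simp
qed

section \<open>Weight vectors\<close>

locale Uq_weight_module =
  fixes r :: nat and scale :: "complex \<Rightarrow> 'a::ab_group_add \<Rightarrow> 'a" and E F K Ki H :: "'a \<Rightarrow> 'a"
  assumes weight_module: "weight_module r scale E F K Ki H"
    and r_ge_2: "2 \<le> r"
begin

sublocale vector_space scale
  using weight_module unfolding weight_module_def by blast

sublocale E: Vector_Spaces.linear scale scale E
  using weight_module unfolding weight_module_def by blast

sublocale F: Vector_Spaces.linear scale scale F
  using weight_module unfolding weight_module_def by blast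

sublocale H: Vector_Spaces.linear scale scale H
  using weight_module unfolding weight_module_def by blast

lemma linear_E: "Vector_Spaces.linear scale scale E"
  and linear_F: "Vector_Spaces.linear scale scale F"
  and linear_H: "Vector_Spaces.linear scale scale H"
  and linear_K: "Vector_Spaces.linear scale scale K"
  and linear_Ki: "Vector_Spaces.linear scale scale Ki"
  and Ki_K: "Ki (K x) = x"
  and commutator_EF: "E (F x) - F (E x) = scale (1 / qbr r 1) (K x - Ki x)"
  and commutator_HE: "H (E x) - E (H x) = scale 2 (E x)"
  and commutator_HF: "H (F x) - F (H x) = scale (-2) (F x)"
  and E_pow_r: "(E ^^ r) x = 0"
  and F_pow_r: "(F ^^ r) x = 0"
  and K_eigen: "H w = scale c w \<Longrightarrow> K w = scale (qp r c) w"
  using weight_module unfolding weight_module_def qbr_def by blast+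

lemma E_pow_zero [simp]: "(E ^^ n) 0 = 0"
  by (induction n) (simp_all add: E.zero)

lemma F_pow_zero [simp]: "(F ^^ n) 0 = 0"
  by (induction n) (simp_all add: F.zero)

lemma span_closed_linear:
  assumes "Vector_Spaces.linear scale scale f" and "\<And>g. g \<in> S \<Longrightarrow> f g \<in> span S"
    and "x \<in> span S"
  shows "f x \<in> span S"
proof -
  have "f ` span S = span (f ` S)"
    using vector_space_pair.linear_span_image[OF _ assms(1)] by (simp add: vector_space_pair_def
        vector_space_axioms)
  also have "\<dots> \<subseteq> span S"
    using assms(2) by (metis image_subsetI span_mono span_span)
  finally show ?thesis
    using assms(3) by blast
qed

definition has_weight :: "'a \<Rightarrow> complex \<Rightarrow> bool" where
  "has_weight y \<mu> \<longleftrightarrow> H y = scale \<mu> y"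

lemma has_weight_E: "has_weight y \<mu> \<Longrightarrow> has_weight (E y) (\<mu> + 2)"
  using commutator_HE[of y] unfolding has_weight_def
  by (simp add: E.scale scale_left_distrib diff_eq_eq add.commute)

lemma has_weight_F: "has_weight y \<mu> \<Longrightarrow> has_weight (F y) (\<mu> - 2)"
  using commutator_HF[of y] unfolding has_weight_def
  by (simp add: F.scale scale_left_diff_distrib diff_eq_eq add.commute)

lemma has_weight_E_pow: "has_weight y \<mu> \<Longrightarrow> has_weight ((E ^^ n) y) (\<mu> + 2 * of_nat n)"
  by (induction n) (auto dest: has_weight_E simp: algebra_simps)

lemma has_weight_F_pow: "has_weight y \<mu> \<Longrightarrow> has_weight ((F ^^ n) y) (\<mu> - 2 * of_nat n)"
  by (induction n) (auto dest: has_weight_F simp: algebra_simps)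

lemma K_has_weight: "has_weight y \<mu> \<Longrightarrow> K y = scale (qp r \<mu>) y"
  using K_eigen unfolding has_weight_def by blast

lemma has_weight_H_K: "has_weight y \<mu> \<Longrightarrow> H y = scale \<mu> y \<and> K y = scale (qp r \<mu>) y"
  using K_has_weight unfolding has_weight_def by blast

lemma Ki_has_weight:
  assumes "has_weight y \<mu>"
  shows "Ki y = scale (qp r (- \<mu>)) y"
proof -
  have "y = scale (qp r (- \<mu>)) (K y)"
    using K_has_weight[OF assms] by (simp add: qp_minus)
  then show ?thesis
    using Vector_Spaces.linear_iff[THEN iffD1, OF linear_Ki] Ki_K by metis
qed

lemma EF_has_weight:
  assumes "has_weight y \<mu>"
  shows "E (F y) = F (E y) + scale (qint r \<mu>) y"
proof -
  have "E (F y) - F (E y) = scale (1 / qbr r 1) (scale (qp r \<mu>) y - scale (qp r (- \<mu>)) y)"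
    using commutator_EF K_has_weight[OF assms] Ki_has_weight[OF assms] by simp
  also have "\<dots> = scale (qint r \<mu>) y"
    unfolding qint_def qbr_def scale_right_diff_distrib scale_scale
    by (metis diff_divide_distrib scale_left_diff_distrib times_divide_eq_left mult_1)
  finally show ?thesis
    by (simp add: diff_eq_eq add.commute)
qed

lemma EF_pow_has_weight:
  assumes "has_weight y \<mu>"
  shows "E ((F ^^ Suc n) y) = (F ^^ Suc n) (E y)
    + scale (qint r (of_nat (Suc n)) * qint r (\<mu> - of_nat (Suc n) + 1)) ((F ^^ n) y)"
proof (induction n)
  case 0
  show ?case
    using EF_has_weight[OF assms] by (simp add: qint_1[OF r_ge_2])
next
  case (Suc n)
  have "E ((F ^^ Suc (Suc n)) y)
      = F (E ((F ^^ Suc n) y)) + scale (qint r (\<mu> - 2 * of_nat (Suc n))) ((F ^^ Suc n) y)"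
    using EF_has_weight[OF has_weight_F_pow[OF assms, of "Suc n"]] by simp
  also have "\<dots> = (F ^^ Suc (Suc n)) (E y) + scale (qint r (of_nat (Suc n)) * qint r (\<mu> - of_nat (Suc n) + 1)
      + qint r (\<mu> - 2 * of_nat (Suc n))) ((F ^^ Suc n) y)"
    unfolding Suc F.add F.scale by (simp add: scale_left_distrib add.assoc)
  also have "qint r (of_nat (Suc n)) * qint r (\<mu> - of_nat (Suc n) + 1) + qint r (\<mu> - 2 * of_nat (Suc n))
      = qint r (of_nat (Suc (Suc n))) * qint r (\<mu> - of_nat (Suc (Suc n)) + 1)"
    using qint_mult_add_qint[OF r_ge_2, of "of_nat (Suc n)" \<mu>] by (simp add: algebra_simps)
  finally show ?case .
qed

lemma FE_pow_has_weight:
  assumes "has_weight y \<mu>"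
  shows "F ((E ^^ Suc n) y) = (E ^^ Suc n) (F y)
    - scale (qint r (of_nat (Suc n)) * qint r (\<mu> + of_nat (Suc n) - 1)) ((E ^^ n) y)"
proof (induction n)
  case 0
  show ?case
    using EF_has_weight[OF assms] by (simp add: qint_1[OF r_ge_2] eq_diff_eq)
next
  case (Suc n)
  have "F ((E ^^ Suc (Suc n)) y)
      = E (F ((E ^^ Suc n) y)) - scale (qint r (\<mu> + 2 * of_nat (Suc n))) ((E ^^ Suc n) y)"
    using EF_has_weight[OF has_weight_E_pow[OF assms, of "Suc n"]] by (simp add: eq_diff_eq)
  also have "\<dots> = (E ^^ Suc (Suc n)) (F y) - scale (qint r (of_nat (Suc n)) * qint r (\<mu> + of_nat (Suc n) - 1)
      + qint r (\<mu> + 2 * of_nat (Suc n))) ((E ^^ Suc n) y)"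
    unfolding Suc E.diff E.scale by (simp add: scale_left_distrib diff_diff_eq)
  also have "qint r (of_nat (Suc n)) * qint r (\<mu> + of_nat (Suc n) - 1) + qint r (\<mu> + 2 * of_nat (Suc n))
      = qint r (of_nat (Suc (Suc n))) * qint r (\<mu> + of_nat (Suc (Suc n)) - 1)"
    using qint_mult_add_qint'[OF r_ge_2, of "of_nat (Suc n)" \<mu>] by (simp add: algebra_simps)
  finally show ?case .
qed

end

section \<open>The Casimir element\<close>

context Uq_weight_module
begin

text \<open>The action of \<open>C - c\<^sub>0\<close> on vectors of weight \<open>\<mu>\<close>.\<close>

definition shifted_casimir :: "complex \<Rightarrow> complex \<Rightarrow> 'a \<Rightarrow> 'a" where
  "shifted_casimir c\<^sub>0 \<mu> y = F (E y) + scale (casimir_const r \<mu> - c\<^sub>0) y"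

lemma shifted_casimir_via_EF:
  assumes "has_weight y \<mu>"
  shows "shifted_casimir c\<^sub>0 \<mu> y = E (F y) + scale (casimir_const r (\<mu> - 2) - c\<^sub>0) y"
  using EF_has_weight[OF assms] casimir_const_step[OF r_ge_2, of "\<mu> - 2"]
  unfolding shifted_casimir_def by (simp add: algebra_simps)

lemma shifted_casimir_zero [simp]: "shifted_casimir c\<^sub>0 \<mu> 0 = 0"
  unfolding shifted_casimir_def by (simp add: E.zero F.zero)

lemma shifted_casimir_scale: "shifted_casimir c\<^sub>0 \<mu> (scale c y) = scale c (shifted_casimir c\<^sub>0 \<mu> y)"
  unfolding shifted_casimir_def by (simp add: E.scale F.scale scale_right_distrib scale_left_commute)

lemma E_shifted_casimir:
  assumes "has_weight y \<mu>"
  shows "E (shifted_casimir c\<^sub>0 \<mu> y) = shifted_casimir c\<^sub>0 (\<mu> + 2) (E y)"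
  using shifted_casimir_via_EF[OF has_weight_E[OF assms]]
  unfolding shifted_casimir_def by (simp add: E.add E.scale)

lemma F_shifted_casimir:
  assumes "has_weight y \<mu>"
  shows "F (shifted_casimir c\<^sub>0 \<mu> y) = shifted_casimir c\<^sub>0 (\<mu> - 2) (F y)"
  using shifted_casimir_via_EF[OF assms]
  unfolding shifted_casimir_def by (simp add: F.add F.scale)

lemma E_pow_shifted_casimir:
  assumes "has_weight y \<mu>"
  shows "(E ^^ n) (shifted_casimir c\<^sub>0 \<mu> y) = shifted_casimir c\<^sub>0 (\<mu> + 2 * of_nat n) ((E ^^ n) y)"
proof (induction n)
  case (Suc n)
  then show ?case
    using E_shifted_casimir[OF has_weight_E_pow[OF assms, of n]] by (simp add: algebra_simps)
qed simp

lemma F_pow_shifted_casimir: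
  assumes "has_weight y \<mu>"
  shows "(F ^^ n) (shifted_casimir c\<^sub>0 \<mu> y) = shifted_casimir c\<^sub>0 (\<mu> - 2 * of_nat n) ((F ^^ n) y)"
proof (induction n)
  case (Suc n)
  then show ?case
    using F_shifted_casimir[OF has_weight_F_pow[OF assms, of n]] by (simp add: algebra_simps)
qed simp

lemma has_weight_shifted_casimir:
  assumes "has_weight y \<mu>"
  shows "has_weight (shifted_casimir c\<^sub>0 \<mu> y) \<mu>"
  using has_weight_F[OF has_weight_E[OF assms]] assms
  unfolding shifted_casimir_def has_weight_def by (simp add: H.add H.scale scale_right_distrib scale_left_commute)

lemma shifted_casimir_nilpotent_eigenvector:
  assumes "shifted_casimir c\<^sub>0 \<mu> (shifted_casimir c\<^sub>0 \<mu> y) = 0"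
    and "shifted_casimir c\<^sub>0 \<mu> y = scale a y" and "a \<noteq> 0"
  shows "y = 0"
  using assms by (simp add: shifted_casimir_scale)

lemma E_pow_vanishing_descent:
  assumes y: "has_weight y \<mu>" and nil: "shifted_casimir c\<^sub>0 \<mu> (shifted_casimir c\<^sub>0 \<mu> y) = 0"
    and top: "(E ^^ N) y = 0" and "m \<le> N"
    and neq: "\<And>n. m \<le> n \<Longrightarrow> n < N \<Longrightarrow> casimir_const r (\<mu> + 2 * of_nat n) \<noteq> c\<^sub>0"
  shows "(E ^^ m) y = 0"
  using \<open>m \<le> N\<close>
proof (induction m rule: inc_induct)
  case base
  show ?case
    by (rule top)
next
  case (step n)
  let ?z = "(E ^^ n) y" and ?\<nu> = "\<mu> + 2 * of_nat n"
  have "shifted_casimir c\<^sub>0 ?\<nu> (shifted_casimir c\<^sub>0 ?\<nu> ?z) = 0"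
    using nil E_pow_shifted_casimir[OF y, of n c\<^sub>0]
      E_pow_shifted_casimir[OF has_weight_shifted_casimir[OF y, of c\<^sub>0], of n c\<^sub>0]
    by (metis E_pow_zero)
  moreover have "shifted_casimir c\<^sub>0 ?\<nu> ?z = scale (casimir_const r ?\<nu> - c\<^sub>0) ?z"
    using step.IH by (simp add: shifted_casimir_def)
  ultimately show ?case
    using shifted_casimir_nilpotent_eigenvector neq[OF step.hyps] by simp
qed

lemma F_pow_vanishing_descent:
  assumes y: "has_weight y \<mu>" and nil: "shifted_casimir c\<^sub>0 \<mu> (shifted_casimir c\<^sub>0 \<mu> y) = 0"
    and top: "(F ^^ N) y = 0" and "m \<le> N"
    and neq: "\<And>n. m \<le> n \<Longrightarrow> n < N \<Longrightarrow> casimir_const r (\<mu> - 2 * of_nat n - 2) \<noteq> c\<^sub>0"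
  shows "(F ^^ m) y = 0"
  using \<open>m \<le> N\<close>
proof (induction m rule: inc_induct)
  case base
  show ?case
    by (rule top)
next
  case (step n)
  let ?z = "(F ^^ n) y" and ?\<nu> = "\<mu> - 2 * of_nat n"
  have "shifted_casimir c\<^sub>0 ?\<nu> (shifted_casimir c\<^sub>0 ?\<nu> ?z) = 0"
    using nil F_pow_shifted_casimir[OF y, of n c\<^sub>0]
      F_pow_shifted_casimir[OF has_weight_shifted_casimir[OF y, of c\<^sub>0], of n c\<^sub>0]
    by (metis F_pow_zero)
  moreover have "shifted_casimir c\<^sub>0 ?\<nu> ?z = scale (casimir_const r (?\<nu> - 2) - c\<^sub>0) ?z"
    using step.IH shifted_casimir_via_EF[OF has_weight_F_pow[OF y]] by simp
  ultimately show ?case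
    using shifted_casimir_nilpotent_eigenvector neq[OF step.hyps] by simp
qed

end

section \<open>Dominant vectors\<close>

locale dominant_vector = Uq_weight_module +
  fixes i j :: nat and v :: 'a and h R s L :: "nat \<Rightarrow> 'a"
  assumes weight_v: "H v = scale (of_nat i) v"
    and dominant: "F (E (F (E v))) = 0"
    and i_le: "i + 2 \<le> r"
    and j_eq: "j = r - 2 - i"
    and h_eq: "\<And>k. h k = (F ^^ k) v"
    and R_eq: "\<And>k. R k = (E ^^ k) (E v)"
    and s_eq: "\<And>k. s k = (F ^^ k) (F (E v))"
    and L_eq: "\<And>k. L k = (F ^^ k) ((F ^^ (i + 1)) v)"
begin

abbreviation c\<^sub>0 :: complex where
  "c\<^sub>0 \<equiv> casimir_const r (of_nat i)"

lemma r_eq: "r = i + j + 2"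
  using i_le j_eq by simp

lemma v_has_weight: "has_weight v (of_nat i)"
  using weight_v unfolding has_weight_def .

lemma FEv_has_weight: "has_weight (F (E v)) (of_nat i)"
  using has_weight_F[OF has_weight_E[OF v_has_weight]] by simp

lemma shifted_casimir_v: "shifted_casimir c\<^sub>0 (of_nat i) v = F (E v)"
  unfolding shifted_casimir_def by simp

lemma shifted_casimir_FEv: "shifted_casimir c\<^sub>0 (of_nat i) (F (E v)) = 0"
  unfolding shifted_casimir_def using dominant by simp

lemma casimir_const_neq_c0:
  assumes "\<not> int (2 * r) dvd (a - int i)" and "\<not> int (2 * r) dvd (a + int i + 2)"
  shows "casimir_const r (of_int a) \<noteq> c\<^sub>0"
  using casimir_const_neq[OF r_ge_2 assms] by simp

lemma E_pow_v_eq_0: "(E ^^ (j + 2)) v = 0"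
proof (rule E_pow_vanishing_descent[OF v_has_weight _ E_pow_r])
  show "shifted_casimir c\<^sub>0 (of_nat i) (shifted_casimir c\<^sub>0 (of_nat i) v) = 0"
    using shifted_casimir_v shifted_casimir_FEv by simp
  show "j + 2 \<le> r"
    using r_eq by simp
  fix n assume n: "j + 2 \<le> n" "n < r"
  have "casimir_const r (of_int (int i + 2 * int n)) \<noteq> c\<^sub>0"
  proof (rule casimir_const_neq_c0)
    show "\<not> int (2 * r) dvd (int i + 2 * int n - int i)"
      by (rule not_dvd_between_multiples[where k = 0]) (use n r_eq in simp_all)
    show "\<not> int (2 * r) dvd (int i + 2 * int n + int i + 2)"
      by (rule not_dvd_between_multiples[where k = 1]) (use n r_eq in simp_all)
  qed
  then show "casimir_const r (of_nat i + 2 * of_nat n) \<noteq> c\<^sub>0"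
    by simp
qed

lemma E_R_top: "E (R j) = 0"
  using E_pow_v_eq_0 by (simp add: R_eq funpow_swap1)

lemma E_s_0: "E (s 0) = 0"
proof -
  have "(E ^^ 1) (F (E v)) = 0"
  proof (rule E_pow_vanishing_descent[OF FEv_has_weight _ _ _])
    show "shifted_casimir c\<^sub>0 (of_nat i) (shifted_casimir c\<^sub>0 (of_nat i) (F (E v))) = 0"
      using shifted_casimir_FEv by simp
    txt \<open>In weight \<open>i + 2j + 2 = 2r - i - 2\<close> the Casimir constant is \<open>c\<^sub>0\<close> again, so the
      descent has to start below it; there \<open>E\<^sup>j\<^sup>+\<^sup>1FEv = (C - c\<^sub>0)E\<^sup>j\<^sup>+\<^sup>1v\<close>.\<close>
    have "casimir_const r (of_int (int i + 2 * int (j + 1))) = c\<^sub>0"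
      using casimir_const_reflect[of r "int i + 2 * int (j + 1)" "int i"] r_eq by simp
    then have "(E ^^ (j + 1)) (F (E v)) = F (E ((E ^^ (j + 1)) v))"
      using E_pow_shifted_casimir[OF v_has_weight, of "j + 1" c\<^sub>0]
      by (simp add: shifted_casimir_v shifted_casimir_def)
    then show "(E ^^ (j + 1)) (F (E v)) = 0"
      using E_pow_v_eq_0 by (simp add: funpow_swap1)
    show "1 \<le> j + 1"
      by simp
    fix n assume n: "1 \<le> n" "n < j + 1"
    have "casimir_const r (of_int (int i + 2 * int n)) \<noteq> c\<^sub>0"
    proof (rule casimir_const_neq_c0)
      show "\<not> int (2 * r) dvd (int i + 2 * int n - int i)"
        by (rule not_dvd_between_multiples[where k = 0]) (use n r_eq in simp_all)
      show "\<not> int (2 * r) dvd (int i + 2 * int n + int i + 2)"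
        by (rule not_dvd_between_multiples[where k = 0]) (use n r_eq in simp_all)
    qed
    then show "casimir_const r (of_nat i + 2 * of_nat n) \<noteq> c\<^sub>0"
      by simp
  qed
  then show ?thesis
    by (simp add: s_eq)
qed

lemma F_s_top: "F (s i) = 0"
proof -
  have "(F ^^ (i + 1)) (F (E v)) = 0"
  proof (rule F_pow_vanishing_descent[OF FEv_has_weight _ _ _])
    show "shifted_casimir c\<^sub>0 (of_nat i) (shifted_casimir c\<^sub>0 (of_nat i) (F (E v))) = 0"
      using shifted_casimir_FEv by simp
    have "(F ^^ (i + j + 1)) (F (E v)) = (F ^^ r) (E v)"
      by (simp add: r_eq funpow_swap1)
    then show "(F ^^ (i + j + 1)) (F (E v)) = 0"
      by (simp add: F_pow_r)
    show "i + 1 \<le> i + j + 1"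
      by simp
    fix n assume n: "i + 1 \<le> n" "n < i + j + 1"
    have "casimir_const r (of_int (int i - 2 * int n - 2)) \<noteq> c\<^sub>0"
    proof (rule casimir_const_neq_c0)
      show "\<not> int (2 * r) dvd (int i - 2 * int n - 2 - int i)"
        by (rule not_dvd_between_multiples[where k = "-1"]) (use n r_eq in simp_all)
      show "\<not> int (2 * r) dvd (int i - 2 * int n - 2 + int i + 2)"
        by (rule not_dvd_between_multiples[where k = "-1"]) (use n r_eq in simp_all)
    qed
    then show "casimir_const r (of_nat i - 2 * of_nat n - 2) \<noteq> c\<^sub>0"
      by simp
  qed
  then show ?thesis
    by (simp add: s_eq)
qed

lemma F_pow_FEv_eq_0:
  assumes "i + 1 \<le> n"
  shows "(F ^^ n) (F (E v)) = 0"
proof -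
  define m where "m = n - Suc i"
  have "n = m + Suc i"
    using assms unfolding m_def by simp
  then have "(F ^^ n) (F (E v)) = (F ^^ m) (F (s i))"
    by (simp only: s_eq funpow_add o_apply funpow.simps(2))
  then show ?thesis
    using F_s_top by simp
qed

lemma F_L_top: "F (L j) = 0"
proof -
  have "F (L j) = (F ^^ (Suc j + (i + 1))) v"
    unfolding L_eq funpow_add o_apply by simp
  also have "Suc j + (i + 1) = r"
    using r_eq by simp
  finally show ?thesis
    by (simp add: F_pow_r)
qed

lemma E_R: "E (R k) = R (k + 1)"
  and E_h_0: "E (h 0) = R 0"
  and F_R_0: "F (R 0) = s 0"
  and F_h: "F (h k) = h (k + 1)"
  and F_s: "F (s k) = s (k + 1)"
  and F_L: "F (L k) = L (k + 1)"
  and F_h_top: "F (h i) = L 0"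
  by (simp_all add: R_eq h_eq s_eq L_eq)

lemma E_L_0: "E (L 0) = s i"
  using EF_pow_has_weight[OF v_has_weight, of i] by (simp add: L_eq s_eq funpow_swap1)

lemma E_h:
  assumes "0 < k"
  shows "E (h k) = scale (qgamma r i k) (h (k - 1)) + s (k - 1)"
proof -
  obtain n where k: "k = Suc n"
    using assms by (cases k) auto
  show ?thesis
    using EF_pow_has_weight[OF v_has_weight, of n]
    unfolding k h_eq s_eq qgamma_def by (simp add: funpow_swap1 add.commute)
qed

lemma E_s:
  assumes "0 < k"
  shows "E (s k) = scale (qgamma r i k) (s (k - 1))"
proof -
  obtain n where k: "k = Suc n"
    using assms by (cases k) auto
  show ?thesis
    using EF_pow_has_weight[OF FEv_has_weight, of n] E_s_0
    unfolding k s_eq qgamma_def by simp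
qed

lemma F_R:
  assumes "0 < k"
  shows "F (R k) = scale (- qgamma r j k) (R (k - 1))"
proof -
  obtain n where k: "k = Suc n"
    using assms by (cases k) auto
  have reflect: "(of_nat j - of_nat k + 1 :: complex) = of_nat r - (of_nat i + 2 + of_nat k - 1)"
    using r_eq by simp
  have "qint r (of_nat j - of_nat k + 1) = qint r (of_nat i + 2 + of_nat k - 1)"
    unfolding reflect using i_le by (intro qint_reflect) simp
  then have "qgamma r j k = qint r (of_nat k) * qint r (of_nat i + 2 + of_nat k - 1)"
    unfolding qgamma_def by simp
  then show ?thesis
    using FE_pow_has_weight[OF has_weight_E[OF v_has_weight], of n] E_s_0
    unfolding k R_eq by (simp add: s_eq funpow_swap1)
qed

lemma E_L:
  assumes "0 < k"
  shows "E (L k) = scale (- qgamma r j k) (L (k - 1))"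
proof -
  obtain n where k: "k = Suc n"
    using assms by (cases k) auto
  have L_alt: "L m = (F ^^ (m + (i + 1))) v" for m
    unfolding L_eq funpow_add o_apply ..
  have reflect: "(of_nat j - of_nat k + 1 :: complex) = of_nat r - of_nat (Suc (n + (i + 1)))"
    using r_eq unfolding k by simp
  have "qint r (of_nat j - of_nat k + 1) = qint r (of_nat (Suc (n + (i + 1))))"
    unfolding reflect using i_le by (intro qint_reflect) simp
  moreover have "(of_nat i - of_nat (Suc (n + (i + 1))) + 1 :: complex) = - of_nat k"
    unfolding k by simp
  ultimately have "qint r (of_nat (Suc (n + (i + 1)))) * qint r (of_nat i - of_nat (Suc (n + (i + 1))) + 1)
      = - qgamma r j k"
    unfolding qgamma_def by (simp add: qint_minus)
  moreover have "(F ^^ Suc (n + (i + 1))) (E v) = 0"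
    using F_pow_FEv_eq_0[of "n + (i + 1)"] by (simp add: funpow_swap1)
  ultimately show ?thesis
    using EF_pow_has_weight[OF v_has_weight, of "n + (i + 1)"] unfolding L_alt k by simp
qed

lemma h_has_weight: "has_weight (h k) (of_int (int i - 2 * int k))"
  using has_weight_F_pow[OF v_has_weight] by (simp add: h_eq)

lemma s_has_weight: "has_weight (s k) (of_int (int i - 2 * int k))"
  using has_weight_F_pow[OF FEv_has_weight] by (simp add: s_eq)

lemma R_has_weight: "has_weight (R k) (of_int (int r - int j + 2 * int k))"
proof -
  have "(of_int (int r - int j + 2 * int k) :: complex) = of_nat i + 2 + 2 * of_nat k"
    using r_eq by simp
  then show ?thesis
    using has_weight_E_pow[OF has_weight_E[OF v_has_weight], of k] by (simp only: R_eq)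
qed

lemma L_has_weight: "has_weight (L k) (of_int (int j - int r - 2 * int k))"
proof -
  have "(of_int (int j - int r - 2 * int k) :: complex) = of_nat i - 2 * of_nat (i + 1) - 2 * of_nat k"
    using r_eq by simp
  then show ?thesis
    using has_weight_F_pow[OF has_weight_F_pow[OF v_has_weight, of "i + 1"], of k] by (simp only: L_eq)
qed

abbreviation generators :: "'a set" where
  "generators \<equiv> h ` {0..i} \<union> R ` {0..j} \<union> s ` {0..i} \<union> L ` {0..j}"

lemma generators_in_span:
  "k \<le> i \<Longrightarrow> h k \<in> span generators" "k \<le> j \<Longrightarrow> R k \<in> span generators"
  "k \<le> i \<Longrightarrow> s k \<in> span generators" "k \<le> j \<Longrightarrow> L k \<in> span generators"
  by (simp_all add: span_base)

lemma E_generator: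
  assumes "g \<in> generators"
  shows "E g \<in> span generators"
proof -
  from assms consider (h) k where "k \<le> i" "g = h k" | (R) k where "k \<le> j" "g = R k"
    | (s) k where "k \<le> i" "g = s k" | (L) k where "k \<le> j" "g = L k"
    by auto
  then show ?thesis
  proof cases
    case h
    then show ?thesis
      by (cases k) (simp_all add: E_h_0 E_h generators_in_span span_add span_scale)
  next
    case R
    show ?thesis
    proof (cases "k = j")
      case True
      then show ?thesis
        using R by (simp add: E_R_top span_zero)
    next
      case False
      then show ?thesis
        using R by (simp add: E_R generators_in_span)
    qed
  next
    case s
    then show ?thesis
      by (cases k) (simp_all add: E_s_0 E_s generators_in_span span_zero span_scale)
  next
    case L
    then show ?thesis
      by (cases k) (simp_all add: E_L_0 E_L generators_in_span span_scale span_neg)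
  qed
qed

lemma F_generator:
  assumes "g \<in> generators"
  shows "F g \<in> span generators"
proof -
  from assms consider (h) k where "k \<le> i" "g = h k" | (R) k where "k \<le> j" "g = R k"
    | (s) k where "k \<le> i" "g = s k" | (L) k where "k \<le> j" "g = L k"
    by auto
  then show ?thesis
  proof cases
    case h
    show ?thesis
    proof (cases "k = i")
      case True
      then show ?thesis
        using h by (simp add: F_h_top generators_in_span)
    next
      case False
      then show ?thesis
        using h by (simp add: F_h generators_in_span)
    qed
  next
    case R
    then show ?thesis
      by (cases k) (simp_all add: F_R_0 F_R generators_in_span span_scale span_neg)
  next
    case s
    show ?thesis
    proof (cases "k = i")
      case True
      then show ?thesis
        using s by (simp add: F_s_top span_zero)
    next
      case False
      then show ?thesis
        using s by (simp add: F_s generators_in_span)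
    qed
  next
    case L
    show ?thesis
    proof (cases "k = j")
      case True
      then show ?thesis
        using L by (simp add: F_L_top span_zero)
    next
      case False
      then show ?thesis
        using L by (simp add: F_L generators_in_span)
    qed
  qed
qed

lemma weight_operators_generator:
  assumes "g \<in> generators"
  shows "K g \<in> span generators \<and> Ki g \<in> span generators \<and> H g \<in> span generators"
proof -
  obtain \<mu> where \<mu>: "has_weight g \<mu>"
    using assms h_has_weight R_has_weight s_has_weight L_has_weight by blast
  show ?thesis
    using K_has_weight[OF \<mu>] Ki_has_weight[OF \<mu>] \<mu>[unfolded has_weight_def]
      span_scale[OF span_base[OF assms]] by simp
qed

lemma span_generators_invariant:
  assumes "x \<in> span generators"
  shows "E x \<in> span generators \<and> F x \<in> span generators \<and> K x \<in> span generators
    \<and> Ki x \<in> span generators \<and> H x \<in> span generators"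
  using span_closed_linear[OF linear_E E_generator assms] span_closed_linear[OF linear_F F_generator assms]
    span_closed_linear[OF linear_K _ assms] span_closed_linear[OF linear_Ki _ assms]
    span_closed_linear[OF linear_H _ assms] weight_operators_generator
  by blast

end

theorem proposition6p1:
  fixes r i j :: nat
    and scale :: "complex \<Rightarrow> 'v::ab_group_add \<Rightarrow> 'v"
    and E F K Ki H :: "'v \<Rightarrow> 'v"
    and v :: 'v
    and h R s L :: "nat \<Rightarrow> 'v"
  assumes mod: "weight_module r scale E F K Ki H"
    and wt: "v \<noteq> 0" "H v = scale (of_nat i) v"
    and dom: "F (E (F (E v))) = 0"
    and ir: "i + 2 \<le> r"
    and jdef: "j = r - 2 - i"
    and hdef: "\<And>k. h k = (F ^^ k) v"
    and Rdef: "\<And>k. R k = (E ^^ k) (E v)"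
    and sdef: "\<And>k. s k = (F ^^ k) (F (E v))"
    and Ldef: "\<And>k. L k = (F ^^ k) ((F ^^ (i + 1)) v)"
  shows
    "(let S = h ` {0..i} \<union> R ` {0..j} \<union> s ` {0..i} \<union> L ` {0..j};
          W = module.span scale S
      in \<forall>x\<in>W. E x \<in> W \<and> F x \<in> W \<and> K x \<in> W \<and> Ki x \<in> W \<and> H x \<in> W)
   \<and> (\<forall>k\<le>i. H (h k) = scale (of_int (int i - 2 * int k)) (h k)
              \<and> K (h k) = scale (qp r (of_int (int i - 2 * int k))) (h k))
   \<and> (\<forall>k\<le>i. H (s k) = scale (of_int (int i - 2 * int k)) (s k)
              \<and> K (s k) = scale (qp r (of_int (int i - 2 * int k))) (s k))
   \<and> (\<forall>k\<le>j. H (R k) = scale (of_int (int r - int j + 2 * int k)) (R k)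
              \<and> K (R k) = scale (qp r (of_int (int r - int j + 2 * int k))) (R k))
   \<and> (\<forall>k\<le>j. H (L k) = scale (of_int (int j - int r - 2 * int k)) (L k)
              \<and> K (L k) = scale (qp r (of_int (int j - int r - 2 * int k))) (L k))
   \<and> (\<forall>k<j. E (R k) = R (k + 1))
   \<and> (\<forall>k<i. F (h k) = h (k + 1))
   \<and> (\<forall>k<i. F (s k) = s (k + 1))
   \<and> (\<forall>k<j. F (L k) = L (k + 1))
   \<and> F (h i) = L 0
   \<and> E (L 0) = s i
   \<and> E (R j) = 0 \<and> E (s 0) = 0 \<and> F (s i) = 0 \<and> F (L j) = 0
   \<and> (\<forall>k. 1 \<le> k \<and> k \<le> i \<longrightarrow>
          E (h k) = scale (qgamma r i k) (h (k - 1)) + s (k - 1))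
   \<and> (\<forall>k. 1 \<le> k \<and> k \<le> i \<longrightarrow> E (s k) = scale (qgamma r i k) (s (k - 1)))
   \<and> (\<forall>k. 1 \<le> k \<and> k \<le> j \<longrightarrow> F (R k) = scale (- qgamma r j k) (R (k - 1)))
   \<and> (\<forall>k. 1 \<le> k \<and> k \<le> j \<longrightarrow> E (L k) = scale (- qgamma r j k) (L (k - 1)))"
proof -
  interpret dominant_vector r scale E F K Ki H i j v h R s L
    by unfold_locales (use mod wt(2) dom ir jdef hdef Rdef sdef Ldef in auto)
  show ?thesis
    unfolding Let_def
    using span_generators_invariant has_weight_H_K[OF h_has_weight] has_weight_H_K[OF s_has_weight]
      has_weight_H_K[OF R_has_weight] has_weight_H_K[OF L_has_weight]
      E_R F_h F_s F_L F_h_top E_L_0 E_R_top E_s_0 F_s_top F_L_top E_h E_s F_R E_L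
    by simp
qed

end
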